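(* Let $\psi\in\mathcal C$, let $F_1,F_2:\mathbb R\to(0,\infty)$ be measurable, let $h:(0,\infty)\to(0,\infty)$ be continuous and let $g\in\mathcal F^+_{\psi^*}$. Then for every $T\in SL_{\pm}(n)$, $$V_{h,F_1,F_2}(\psi\circ T,\,g\circ T^{-t})=V_{h,F_1,F_2}(\psi,g).$$
   Context: $\mathcal C$ is the set of convex functions $\psi:\mathbb R^n\to\mathbb R\cup\{+\infty\}$ whose domain has nonempty interior; $\psi^*(y)=\sup_x(\langle x,y\rangle-\psi(x))$ is the Legendre transform; $\nabla^2\psi$ is the Alexandrov Hessian and $X_\psi=\{x:\psi(x)<\infty,\ \nabla^2\psi(x)\text{ exists and is invertible}\}$. $I(g,\psi^* )=\int_{X_{\psi^*}}g$, and $\mathcal F^+_{\psi^*}$ is the set of integrable $g>0$ on $X_{\psi^*}$ with $0<I(g,\psi^* )<\infty$. The Orlicz mixed integral is $$V_{h,F_1,F_2}(\psi,g)=\int_{X_\psi}h\left(\frac{g(\nabla\psi(x))}{F_2(\langle x,\nabla\psi(x)\rangle-\psi(x))}\right)F_1(\psi(x))\,dx.$$ $SL_{\pm}(n)$ is the set of linear maps $T$ of $\mathbb R^n$ with $\det T=\pm1$; $T^{-t}$ is the inverse of the transpose of $T$; $(\psi\circ T)(x)=\psi(Tx)$. Standing assumption: functions are regular and integrable enough that all integrals are well defined. *)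

theory Defs
  imports "HOL-Analysis.Analysis"
begin

text \<open>Extended-valued functions psi : R^n -> R \<union> {+\<infinity>} are modelled as ereal-valued
  functions that never take the value -\<infinity>.\<close>

definition edom :: "(real^'n \<Rightarrow> ereal) \<Rightarrow> (real^'n) set" where
  "edom \<psi> = {x. \<psi> x < \<infinity>}"

definition cvx_C :: "(real^'n \<Rightarrow> ereal) \<Rightarrow> bool" where
  "cvx_C \<psi> \<longleftrightarrow> (\<forall>x. \<psi> x \<noteq> -\<infinity>)
     \<and> convex {(x, r::real). \<psi> x \<le> ereal r}
     \<and> interior (edom \<psi>) \<noteq> {}"

definition legendre :: "(real^'n \<Rightarrow> ereal) \<Rightarrow> real^'n \<Rightarrow> ereal" where
  "legendre \<psi> y = (SUP x. ereal (x \<bullet> y) - \<psi> x)"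

definition alex_hess :: "(real^'n \<Rightarrow> ereal) \<Rightarrow> real^'n \<Rightarrow> real^'n^'n \<Rightarrow> bool" where
  "alex_hess \<psi> x A \<longleftrightarrow> x \<in> interior (edom \<psi>) \<and> transpose A = A \<and>
     (\<exists>v. ((\<lambda>y. (real_of_ereal (\<psi> y) - real_of_ereal (\<psi> x) - v \<bullet> (y - x)
                  - (1/2) * ((y - x) \<bullet> (A *v (y - x)))) / (norm (y - x))\<^sup>2) \<longlongrightarrow> 0) (at x))"

definition hess :: "(real^'n \<Rightarrow> ereal) \<Rightarrow> real^'n \<Rightarrow> real^'n^'n" where
  "hess \<psi> x = (SOME A. alex_hess \<psi> x A)"

definition grad :: "(real^'n \<Rightarrow> ereal) \<Rightarrow> real^'n \<Rightarrow> real^'n" where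
  "grad \<psi> x = (SOME v. ((\<lambda>y. real_of_ereal (\<psi> y)) has_derivative (\<lambda>h. v \<bullet> h)) (at x))"

definition Xset :: "(real^'n \<Rightarrow> ereal) \<Rightarrow> (real^'n) set" where
  "Xset \<psi> = {x. \<psi> x < \<infinity> \<and> (\<exists>A. alex_hess \<psi> x A) \<and> invertible (hess \<psi> x)}"

text \<open>F^+_{psi*}: here the argument is the function psi* itself.\<close>
definition Fplus :: "(real^'n \<Rightarrow> ereal) \<Rightarrow> (real^'n \<Rightarrow> real) set" where
  "Fplus \<phi> = {g. set_integrable lebesgue (Xset \<phi>) g \<and> (\<forall>y\<in>Xset \<phi>. g y > 0)
                 \<and> 0 < (LINT y:Xset \<phi>|lebesgue. g y)}"

text \<open>The Orlicz mixed integral (nonnegative Lebesgue integral; the integrand is positive).\<close>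
definition orliczV :: "(real \<Rightarrow> real) \<Rightarrow> (real \<Rightarrow> real) \<Rightarrow> (real \<Rightarrow> real)
     \<Rightarrow> (real^'n \<Rightarrow> ereal) \<Rightarrow> (real^'n \<Rightarrow> real) \<Rightarrow> ennreal" where
  "orliczV h F1 F2 \<psi> g =
     (\<integral>\<^sup>+ x \<in> Xset \<psi>. ennreal (h (g (grad \<psi> x) / F2 (x \<bullet> grad \<psi> x - real_of_ereal (\<psi> x)))
                              * F1 (real_of_ereal (\<psi> x))) \<partial>lebesgue)"

definition SLpm :: "(real^'n^'n) set" where
  "SLpm = {T. det T = 1 \<or> det T = -1}"

end

theory Submission
  imports Defs
begin

text \<open>The Alexandrov Hessian of \<open>\<psi> \<circ> T\<close> at \<open>x\<close> is \<open>T\<^sup>t (\<nabla>\<^sup>2\<psi>)(Tx) T\<close>, so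
  \<open>x \<in> X\<^sub>\<psi>\<^sub>\<circ>\<^sub>T\<close> iff \<open>Tx \<in> X\<^sub>\<psi>\<close>, and \<open>\<nabla>(\<psi> \<circ> T)(x) = T\<^sup>t \<nabla>\<psi>(Tx)\<close>. Hence
  \<open>g(T\<^sup>-\<^sup>t \<nabla>(\<psi> \<circ> T)(x)) = g(\<nabla>\<psi>(Tx))\<close> and \<open>\<langle>x, \<nabla>(\<psi> \<circ> T)(x)\<rangle> = \<langle>Tx, \<nabla>\<psi>(Tx)\<rangle>\<close>: the
  integrand on the left is the one on the right composed with \<open>T\<close>, and Lebesgue measure is
  invariant under \<open>T\<close> because \<open>|det T| = 1\<close>.\<close>

section \<open>Lebesgue measure under linear maps\<close>

lemma det_matrix_shear:
  fixes m n :: "'n::finite"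
  assumes "m \<noteq> n"
  shows "det (matrix (\<lambda>x::real^'n. \<chi> i. if i = m then x $ m + x $ n else x $ i)) = 1"
proof -
  have "matrix (\<lambda>x::real^'n. \<chi> i. if i = m then x $ m + x $ n else x $ i)
      = (\<chi> k. if k = m then row m (mat 1) + 1 *s row n (mat 1) else row k (mat 1))"
    by (auto simp: vec_eq_iff matrix_def axis_def row_def mat_def)
  then show ?thesis
    using det_row_operation[OF assms, of "mat 1" 1] by simp
qed

lemma measure_shear_cbox:
  fixes a b :: "real^'n"
  assumes "m \<noteq> n"
  shows "measure lebesgue ((\<lambda>x. \<chi> i. if i = m then x $ m + x $ n else x $ i) ` cbox a b)
           = measure lebesgue (cbox a b)"
proof (cases "cbox a b = {}")
  case False
  let ?sh = "\<lambda>x::real^'n. \<chi> i. if i = m then x $ m + x $ n else x $ i"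
  define c :: "real^'n" where "c = axis n (a $ n)"
  \<comment> \<open>translating by \<open>c\<close> makes the \<open>n\<close>-th lower corner 0, as \<open>measure_shear_interval\<close> requires\<close>
  have box: "cbox a b = (+) c ` cbox (a - c) (b - c)"
    using cbox_translation[of c "a - c" "b - c"] by simp
  have "?sh ` cbox a b = (+) (?sh c) ` ?sh ` cbox (a - c) (b - c)"
    unfolding box image_comp by (rule image_cong) (auto simp: vec_eq_iff)
  then have "measure lebesgue (?sh ` cbox a b) = measure lebesgue (?sh ` cbox (a - c) (b - c))"
    by (simp add: measure_translation)
  also have "\<dots> = measure lebesgue (cbox (a - c) (b - c))"
    using False assms by (intro measure_shear_interval) (auto simp: box c_def axis_def)
  also have "\<dots> = measure lebesgue (cbox a b)"
    by (simp add: box measure_translation)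
  finally show ?thesis .
qed simp

lemma abs_det_matrix_permute_coordinates:
  fixes p :: "'n::finite \<Rightarrow> 'n"
  assumes p: "p permutes UNIV"
  shows "\<bar>det (matrix (\<lambda>x::real^'n. \<chi> i. x $ p i))\<bar> = 1"
proof -
  have "matrix (\<lambda>x::real^'n. \<chi> i. x $ p i) = (\<chi> i. mat 1 $ p i)"
    by (simp add: matrix_def vec_eq_iff axis_def mat_def)
  then show ?thesis
    by (simp add: det_permute_rows[OF p] abs_mult sign_def)
qed

lemma measure_permute_coordinates_cbox:
  fixes a b :: "real^'n"
  assumes p: "p permutes UNIV"
  shows "measure lebesgue ((\<lambda>x. \<chi> i. x $ p i) ` cbox a b) = measure lebesgue (cbox a b)"
proof -
  have inv: "p (inv p i) = i" "inv p (p i) = i" for i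
    using p by (auto simp: permutes_inverses)
  have img: "(\<lambda>x. \<chi> i. x $ p i) ` cbox a b = cbox (\<chi> i. a $ p i) (\<chi> i. b $ p i)"
  proof (intro equalityI subsetI)
    fix y assume "y \<in> cbox (\<chi> i. a $ p i) (\<chi> i. b $ p i)"
    then have "(\<chi> i. y $ inv p i) \<in> cbox a b"
      by (auto simp: mem_box_cart) (metis inv(1))+
    moreover have "y = (\<chi> i. (\<chi> i. y $ inv p i) $ p i)"
      by (simp add: vec_eq_iff inv)
    ultimately show "y \<in> (\<lambda>x. \<chi> i. x $ p i) ` cbox a b" by blast
  qed (auto simp: mem_box_cart)
  have prod: "(\<Prod>i\<in>UNIV. b $ p i - a $ p i) = (\<Prod>i\<in>UNIV. b $ i - a $ i)"
    using prod.permute[OF p, of "\<lambda>i. b $ i - a $ i"] by (simp add: comp_def)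
  show ?thesis
  proof (cases "cbox a b = {}")
    case False
    then have "cbox (\<chi> i. a $ p i) (\<chi> i. b $ p i) \<noteq> {}"
      unfolding img[symmetric] by blast
    with False show ?thesis
      by (simp add: img content_cbox_cart prod)
  qed (simp add: img[symmetric])
qed

definition det_scales_lebesgue :: "(real^'n \<Rightarrow> real^'n) \<Rightarrow> bool" where
  "det_scales_lebesgue f \<longleftrightarrow> (\<forall>S \<in> lmeasurable. f ` S \<in> lmeasurable \<and>
     measure lebesgue (f ` S) = \<bar>det (matrix f)\<bar> * measure lebesgue S)"

lemma det_scales_lebesgue_if_cbox:
  assumes "linear f"
    and "\<And>a b. measure lebesgue (f ` cbox a b) = \<bar>det (matrix f)\<bar> * measure lebesgue (cbox a b)"
  shows "det_scales_lebesgue f"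
  using measure_linear_sufficient[OF assms(1) _ assms(2)] by (simp add: det_scales_lebesgue_def)

lemma det_scales_lebesgue_compose:
  fixes f g :: "real^'n \<Rightarrow> real^'n"
  assumes "linear f" "linear g" "det_scales_lebesgue f" "det_scales_lebesgue g"
  shows "det_scales_lebesgue (f \<circ> g)"
proof -
  have "matrix (f \<circ> g) = matrix f ** matrix g"
    using \<open>linear g\<close> \<open>linear f\<close> by (rule matrix_compose)
  then have det: "\<bar>det (matrix (f \<circ> g))\<bar> = \<bar>det (matrix f)\<bar> * \<bar>det (matrix g)\<bar>"
    by (simp add: det_mul abs_mult)
  show ?thesis
    unfolding det_scales_lebesgue_def
  proof
    fix S :: "(real^'n) set"
    assume "S \<in> lmeasurable"
    then show "(f \<circ> g) ` S \<in> lmeasurable \<and>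
        measure lebesgue ((f \<circ> g) ` S) = \<bar>det (matrix (f \<circ> g))\<bar> * measure lebesgue S"
      using assms(3,4) unfolding det_scales_lebesgue_def image_comp[symmetric] det by auto
  qed
qed

text \<open>The library proves this (\<open>measure_linear_image\<close>) only for wellordered index types;
  the reduction to elementary linear maps works for every finite one.\<close>
lemma det_scales_lebesgue_linear:
  fixes f :: "real^'n \<Rightarrow> real^'n"
  assumes "linear f"
  shows "det_scales_lebesgue f"
proof (rule induct_linear_elementary[OF assms])
  fix f :: "real^'n \<Rightarrow> real^'n" and i
  assume f: "linear f" "\<And>x. f x $ i = 0"
  then have "\<not> inj f"
    by (metis linear_injective_imp_surjective one_neq_zero surjE vec_component)
  then have "det (matrix f) = 0" and "negligible (f ` S)" for S
    using f det_nz_iff_inj negligible_linear_singular_image by blast+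
  then show "det_scales_lebesgue f"
    by (simp add: det_scales_lebesgue_def negligible_imp_measurable negligible_imp_measure0)
next
  fix c :: "'n \<Rightarrow> real"
  show "det_scales_lebesgue (\<lambda>x. \<chi> i. c i * x $ i)"
    by (simp add: det_scales_lebesgue_def measurable_stretch measure_stretch matrix_def axis_def
        det_diagonal)
next
  fix m n :: 'n
  assume "m \<noteq> n"
  have p: "Transposition.transpose m n permutes UNIV"
    by (rule permutes_swap_id) auto
  show "det_scales_lebesgue (\<lambda>x. \<chi> i. x $ Transposition.transpose m n i)"
  proof (rule det_scales_lebesgue_if_cbox)
    show "linear (\<lambda>x::real^'n. \<chi> i. x $ Transposition.transpose m n i)"
      by (rule linearI) (simp_all add: vec_eq_iff)
  qed (simp add: abs_det_matrix_permute_coordinates[OF p] measure_permute_coordinates_cbox[OF p])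
next
  fix m n :: 'n
  assume "m \<noteq> n"
  then show "det_scales_lebesgue (\<lambda>x. \<chi> i. if i = m then x $ m + x $ n else x $ i)"
    by (intro det_scales_lebesgue_if_cbox)
      (auto intro!: linearI simp: vec_eq_iff algebra_simps det_matrix_shear measure_shear_cbox)
qed (rule det_scales_lebesgue_compose)

lemma
  fixes f :: "real^'n \<Rightarrow> real^'n"
  assumes "linear f" and S: "S \<in> sets lebesgue"
  shows sets_lebesgue_linear_image: "f ` S \<in> sets lebesgue"
    and emeasure_linear_image: "emeasure lebesgue (f ` S) = ennreal \<bar>det (matrix f)\<bar> * emeasure lebesgue S"
proof -
  define A where "A k = S \<inter> cball 0 (real k)" for k :: nat
  have A: "A k \<in> lmeasurable" for k
    unfolding A_def using S fmeasurable_Int_fmeasurable[of "cball 0 (real k)" lebesgue S]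
    by (simp add: Int_commute)
  have fA: "f ` A k \<in> lmeasurable" for k
    using det_scales_lebesgue_linear[OF \<open>linear f\<close>] A by (simp add: det_scales_lebesgue_def)
  have S_eq: "S = (\<Union>k. A k)"
    by (auto simp: A_def real_arch_simple)
  have "incseq A"
    by (auto simp: A_def incseq_def)
  then have "incseq (\<lambda>k. f ` A k)"
    by (auto simp: incseq_def)
  have fS_eq: "f ` S = (\<Union>k. f ` A k)"
    using S_eq by blast
  show "f ` S \<in> sets lebesgue"
    unfolding fS_eq using fA by (intro sets.countable_UN) auto
  have "emeasure lebesgue (f ` S) = (SUP k. emeasure lebesgue (f ` A k))"
    unfolding fS_eq using fA by (intro SUP_emeasure_incseq[symmetric] \<open>incseq (\<lambda>k. f ` A k)\<close>) auto
  also have "\<dots> = (SUP k. ennreal \<bar>det (matrix f)\<bar> * emeasure lebesgue (A k))"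
    using det_scales_lebesgue_linear[OF \<open>linear f\<close>] fA A
    by (simp add: det_scales_lebesgue_def emeasure_eq_measure2 ennreal_mult)
  also have "\<dots> = ennreal \<bar>det (matrix f)\<bar> * (SUP k. emeasure lebesgue (A k))"
    by (rule SUP_mult_left_ennreal[symmetric])
  also have "(SUP k. emeasure lebesgue (A k)) = emeasure lebesgue S"
    unfolding S_eq using A by (intro SUP_emeasure_incseq \<open>incseq A\<close>) auto
  finally show "emeasure lebesgue (f ` S) = ennreal \<bar>det (matrix f)\<bar> * emeasure lebesgue S" .
qed

lemma unimodular_matrix_inverse:
  fixes T :: "real^'n^'n"
  assumes "\<bar>det T\<bar> = 1"
  obtains T' where "T ** T' = mat 1" "T' ** T = mat 1" "\<bar>det T'\<bar> = 1"
proof -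
  have "invertible T"
    using assms by (simp add: invertible_det_nz)
  then obtain T' where T': "T ** T' = mat 1" "T' ** T = mat 1"
    unfolding invertible_def by blast
  then have "\<bar>det T\<bar> * \<bar>det T'\<bar> = 1"
    by (metis abs_1 abs_mult det_I det_mul)
  with assms T' show ?thesis
    using that by simp
qed

lemma
  fixes T :: "real^'n^'n"
  assumes "\<bar>det T\<bar> = 1"
  shows measurable_lebesgue_matrix_vector_mult: "(*v) T \<in> lebesgue \<rightarrow>\<^sub>M lebesgue"
    and distr_lebesgue_matrix_vector_mult: "distr lebesgue lebesgue ((*v) T) = lebesgue"
proof -
  obtain T' where T': "T ** T' = mat 1" "T' ** T = mat 1" "\<bar>det T'\<bar> = 1"
    using unimodular_matrix_inverse[OF assms] .
  have vimage_eq: "(*v) T -` A = (*v) T' ` A" for A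
  proof (intro equalityI subsetI)
    fix x assume "x \<in> (*v) T -` A"
    moreover have "x = T' *v (T *v x)"
      by (simp add: matrix_vector_mul_assoc T'(2))
    ultimately show "x \<in> (*v) T' ` A"
      by blast
  qed (auto simp: matrix_vector_mul_assoc T'(1))
  have lin: "linear ((*v) T')"
    by (rule matrix_vector_mul_linear)
  have emeasure_eq: "emeasure lebesgue ((*v) T' ` A) = emeasure lebesgue A" if "A \<in> sets lebesgue" for A
    using emeasure_linear_image[OF lin that] by (simp add: T'(3))
  show meas: "(*v) T \<in> lebesgue \<rightarrow>\<^sub>M lebesgue"
    by (rule measurableI) (simp_all add: vimage_eq sets_lebesgue_linear_image[OF lin])
  show "distr lebesgue lebesgue ((*v) T) = lebesgue"
    by (rule measure_eqI)
      (simp_all add: emeasure_distr[OF meas] vimage_eq emeasure_eq)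
qed

text \<open>No measurability of \<open>f\<close> is needed: a simple function below \<open>f\<close> on \<open>N\<close> pulls back
  to a simple function below \<open>f \<circ> T\<close> on \<open>M\<close> with the same integral.\<close>
lemma nn_integral_le_nn_integral_compose:
  assumes T: "T \<in> M \<rightarrow>\<^sub>M N" and distr: "distr M N T = N"
  shows "(\<integral>\<^sup>+x. f x \<partial>N) \<le> (\<integral>\<^sup>+x. f (T x) \<partial>M)"
  unfolding nn_integral_def[of N]
proof (rule SUP_least)
  fix g assume "g \<in> {g. simple_function N g \<and> g \<le> f}"
  then have g: "simple_function N g" "g \<le> f"
    by auto
  have "integral\<^sup>S N g = (\<integral>\<^sup>+x. g x \<partial>N)"
    using g(1) by (simp add: nn_integral_eq_simple_integral)
  also have "\<dots> = (\<integral>\<^sup>+x. g (T x) \<partial>M)"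
    using nn_integral_distr[OF T, of g] g(1) distr by (simp add: borel_measurable_simple_function)
  also have "\<dots> \<le> (\<integral>\<^sup>+x. f (T x) \<partial>M)"
    using g(2) by (intro nn_integral_mono) (simp add: le_fun_def)
  finally show "integral\<^sup>S N g \<le> (\<integral>\<^sup>+x. f (T x) \<partial>M)" .
qed

lemma nn_integral_matrix_vector_mult:
  fixes T :: "real^'n^'n"
  assumes "\<bar>det T\<bar> = 1"
  shows "(\<integral>\<^sup>+x. f (T *v x) \<partial>lebesgue) = (\<integral>\<^sup>+x. f x \<partial>lebesgue)"
proof (rule antisym)
  obtain T' where T': "T ** T' = mat 1" "\<bar>det T'\<bar> = 1"
    using unimodular_matrix_inverse[OF assms] by blast
  have "(\<integral>\<^sup>+x. f (T *v x) \<partial>lebesgue) \<le> (\<integral>\<^sup>+x. f (T *v (T' *v x)) \<partial>lebesgue)"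
    using nn_integral_le_nn_integral_compose[OF measurable_lebesgue_matrix_vector_mult[OF T'(2)]
        distr_lebesgue_matrix_vector_mult[OF T'(2)]] .
  also have "\<dots> = (\<integral>\<^sup>+x. f x \<partial>lebesgue)"
    by (simp add: matrix_vector_mul_assoc T'(1))
  finally show "(\<integral>\<^sup>+x. f (T *v x) \<partial>lebesgue) \<le> (\<integral>\<^sup>+x. f x \<partial>lebesgue)" .
  show "(\<integral>\<^sup>+x. f x \<partial>lebesgue) \<le> (\<integral>\<^sup>+x. f (T *v x) \<partial>lebesgue)"
    using nn_integral_le_nn_integral_compose[OF measurable_lebesgue_matrix_vector_mult[OF assms]
        distr_lebesgue_matrix_vector_mult[OF assms]] .
qed

section \<open>Alexandrov Hessians under linear changes of variables\<close>

definition taylor2_remainder :: "(real^'n \<Rightarrow> real) \<Rightarrow> real^'n \<Rightarrow> real^'n \<Rightarrow> real^'n^'n \<Rightarrow> real^'n \<Rightarrow> real"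
  where "taylor2_remainder \<phi> x v A y =
    \<phi> y - \<phi> x - v \<bullet> (y - x) - (1/2) * ((y - x) \<bullet> (A *v (y - x)))"

lemma alex_hess_iff:
  "alex_hess \<psi> x A \<longleftrightarrow> x \<in> interior (edom \<psi>) \<and> transpose A = A \<and>
    (\<exists>v. ((\<lambda>y. taylor2_remainder (\<lambda>y. real_of_ereal (\<psi> y)) x v A y / (norm (y - x))\<^sup>2) \<longlongrightarrow> 0) (at x))"
  by (simp add: alex_hess_def taylor2_remainder_def)

lemma has_derivative_if_taylor2_remainder:
  fixes \<phi> :: "real^'n \<Rightarrow> real"
  assumes lim: "((\<lambda>y. taylor2_remainder \<phi> x v A y / (norm (y - x))\<^sup>2) \<longlongrightarrow> 0) (at x)"
  shows "(\<phi> has_derivative (\<lambda>h. v \<bullet> h)) (at x)"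
proof -
  let ?E = "\<lambda>y. taylor2_remainder \<phi> x v A y / (norm (y - x))\<^sup>2"
  have Ad: "((\<lambda>y. A *v (y - x)) \<longlongrightarrow> 0) (at x)"
    using bounded_linear.tendsto[OF matrix_vector_mul_bounded_linear LIM_zero[OF tendsto_ident_at], of A x]
    by simp
  have "((\<lambda>y. norm (y - x)) \<longlongrightarrow> 0) (at x)"
    by (intro tendsto_norm_zero LIM_zero tendsto_ident_at)
  then have "((\<lambda>y. \<bar>?E y\<bar> * norm (y - x) + norm (A *v (y - x)) / 2) \<longlongrightarrow> 0 * 0 + 0 / 2) (at x)"
    using lim tendsto_norm_zero[OF Ad] by (intro tendsto_add tendsto_mult tendsto_divide tendsto_rabs_zero) auto
  then have bound0: "((\<lambda>y. \<bar>?E y\<bar> * norm (y - x) + norm (A *v (y - x)) / 2) \<longlongrightarrow> 0) (at x)"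
    by simp
  have "\<bar>\<phi> y - \<phi> x - v \<bullet> (y - x)\<bar> / norm (y - x) \<le> \<bar>?E y\<bar> * norm (y - x) + norm (A *v (y - x)) / 2"
    if "y \<noteq> x" for y
  proof -
    have d: "norm (y - x) > 0"
      using that by simp
    have "\<phi> y - \<phi> x - v \<bullet> (y - x) = ?E y * (norm (y - x))\<^sup>2 + (1/2) * ((y - x) \<bullet> (A *v (y - x)))"
      using d by (simp add: taylor2_remainder_def)
    also have "\<bar>\<dots>\<bar> \<le> \<bar>?E y\<bar> * (norm (y - x))\<^sup>2 + (1/2) * (norm (y - x) * norm (A *v (y - x)))"
      using Cauchy_Schwarz_ineq2[of "y - x" "A *v (y - x)"]
      by (auto intro!: order_trans[OF abs_triangle_ineq] add_mono simp: abs_mult)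
    finally show ?thesis
      using d by (simp add: divide_le_eq power2_eq_square algebra_simps)
  qed
  then have "((\<lambda>y. norm (\<phi> y - \<phi> x - v \<bullet> (y - x)) / norm (y - x)) \<longlongrightarrow> 0) (at x)"
    by (intro Lim_null_comparison[OF _ bound0]) (auto simp: eventually_at_filter)
  then show ?thesis
    by (auto simp: has_derivative_iff_norm intro: bounded_linear_inner_right)
qed

lemma grad_eqI:
  assumes "((\<lambda>y. real_of_ereal (\<psi> y)) has_derivative (\<lambda>h. v \<bullet> h)) (at x)"
  shows "grad \<psi> x = v"
proof -
  have "((\<lambda>y. real_of_ereal (\<psi> y)) has_derivative (\<lambda>h. grad \<psi> x \<bullet> h)) (at x)"
    unfolding grad_def using assms by (rule someI)
  from has_derivative_unique[OF this assms]
  have "grad \<psi> x \<bullet> (grad \<psi> x - v) = v \<bullet> (grad \<psi> x - v)"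
    by meson
  then have "(grad \<psi> x - v) \<bullet> (grad \<psi> x - v) = 0"
    by (simp add: inner_diff_left)
  then show ?thesis
    by simp
qed

lemma alex_hess_taylor2_grad:
  assumes "alex_hess \<psi> x A"
  shows "((\<lambda>y. taylor2_remainder (\<lambda>y. real_of_ereal (\<psi> y)) x (grad \<psi> x) A y / (norm (y - x))\<^sup>2)
           \<longlongrightarrow> 0) (at x)"
proof -
  obtain v where v: "((\<lambda>y. taylor2_remainder (\<lambda>y. real_of_ereal (\<psi> y)) x v A y / (norm (y - x))\<^sup>2)
      \<longlongrightarrow> 0) (at x)"
    using assms unfolding alex_hess_iff by blast
  moreover have "grad \<psi> x = v"
    using has_derivative_if_taylor2_remainder[OF v] by (rule grad_eqI)
  ultimately show ?thesis
    by simp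
qed

lemma inner_transpose_matrix_vector: "u \<bullet> (transpose M *v w) = (M *v u) \<bullet> (w :: real^'n)"
  by (simp add: dot_lmul_matrix[symmetric] inner_commute)

lemma quadratic_form_eq_0_if_tendsto:
  fixes C :: "real^'n^'n"
  assumes lim: "((\<lambda>y. (y - x) \<bullet> (C *v (y - x)) / (norm (y - x))\<^sup>2) \<longlongrightarrow> 0) (at x)"
  shows "u \<bullet> (C *v u) = 0"
proof (cases "u = 0")
  case False
  let ?q = "\<lambda>y. (y - x) \<bullet> (C *v (y - x)) / (norm (y - x))\<^sup>2"
  have "((\<lambda>t::real. x + t *\<^sub>R u) \<longlongrightarrow> x) (at 0)"
    by (auto intro!: tendsto_eq_intros)
  \<comment> \<open>no side condition: \<open>?q x = 0\<close> because division by zero yields zero\<close>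
  from tendsto_compose_at[OF this lim]
  have "((?q \<circ> (\<lambda>t. x + t *\<^sub>R u)) \<longlongrightarrow> 0) (at 0)"
    by simp
  moreover have "(?q \<circ> (\<lambda>t. x + t *\<^sub>R u)) t = u \<bullet> (C *v u) / (norm u)\<^sup>2" if "t \<noteq> 0" for t
    using that False by (simp add: matrix_vector_mult_scaleR power2_eq_square field_simps)
  then have "\<forall>\<^sub>F t in at 0. (?q \<circ> (\<lambda>t. x + t *\<^sub>R u)) t = u \<bullet> (C *v u) / (norm u)\<^sup>2"
    by (auto simp: eventually_at_filter)
  ultimately have "((\<lambda>t::real. u \<bullet> (C *v u) / (norm u)\<^sup>2) \<longlongrightarrow> 0) (at 0)"
    by (rule Lim_transform_eventually)
  then show ?thesis
    using False LIM_const_eq by fastforce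
qed simp

lemma symmetric_matrix_eq_0_if_quadratic_form_eq_0:
  fixes C :: "real^'n^'n"
  assumes sym: "transpose C = C" and q: "\<And>u. u \<bullet> (C *v u) = 0"
  shows "C = 0"
proof -
  have "u \<bullet> (C *v w) = 0" for u w
  proof -
    have "w \<bullet> (C *v u) = u \<bullet> (C *v w)"
      by (metis inner_commute inner_transpose_matrix_vector sym)
    then show ?thesis
      using q[of "u + w"] q[of u] q[of w]
      by (simp add: matrix_vector_right_distrib inner_add_left inner_add_right)
  qed
  then have "C *v w = 0 *v w" for w
    by (metis inner_eq_zero_iff matrix_vector_mult_0)
  then show ?thesis
    by (simp add: matrix_eq)
qed

lemma alex_hess_unique:
  assumes A: "alex_hess \<psi> x A" and B: "alex_hess \<psi> x B"
  shows "A = B"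
proof -
  let ?r = "taylor2_remainder (\<lambda>y. real_of_ereal (\<psi> y)) x (grad \<psi> x)"
  have "((\<lambda>y. 2 * (?r A y / (norm (y - x))\<^sup>2 - ?r B y / (norm (y - x))\<^sup>2)) \<longlongrightarrow> 2 * (0 - 0)) (at x)"
    using alex_hess_taylor2_grad[OF A] alex_hess_taylor2_grad[OF B] by (intro tendsto_intros)
  moreover have "2 * (?r A y / (norm (y - x))\<^sup>2 - ?r B y / (norm (y - x))\<^sup>2)
      = (y - x) \<bullet> ((B - A) *v (y - x)) / (norm (y - x))\<^sup>2" for y
  proof -
    have "?r A y - ?r B y = (1/2) * ((y - x) \<bullet> ((B - A) *v (y - x)))"
      by (simp add: taylor2_remainder_def matrix_vector_mult_diff_rdistrib inner_diff_right algebra_simps)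
    then show ?thesis
      by (simp add: diff_divide_distrib[symmetric])
  qed
  ultimately have "((\<lambda>y. (y - x) \<bullet> ((B - A) *v (y - x)) / (norm (y - x))\<^sup>2) \<longlongrightarrow> 0) (at x)"
    by simp
  then have "u \<bullet> ((B - A) *v u) = 0" for u
    by (rule quadratic_form_eq_0_if_tendsto)
  moreover have "transpose (B - A) = B - A"
  proof -
    have "transpose A = A" "transpose B = B"
      using A B by (simp_all add: alex_hess_iff)
    then show ?thesis
      by (simp add: transpose_def vec_eq_iff)
  qed
  ultimately have "B - A = 0"
    using symmetric_matrix_eq_0_if_quadratic_form_eq_0 by blast
  then show ?thesis
    by simp
qed

lemma hess_eqI:
  assumes "alex_hess \<psi> x A"
  shows "hess \<psi> x = A"
  using alex_hess_unique[OF someI[of "alex_hess \<psi> x", OF assms] assms] by (simp add: hess_def)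

lemma taylor2_remainder_linear_compose:
  fixes M :: "real^'n^'n"
  shows "taylor2_remainder (\<lambda>y. \<phi> (M *v y)) x (transpose M *v v) (transpose M ** A ** M) y
           = taylor2_remainder \<phi> (M *v x) v A (M *v y)"
proof -
  have "(transpose M *v v) \<bullet> (y - x) = v \<bullet> (M *v (y - x))"
    by (metis inner_commute inner_transpose_matrix_vector)
  moreover have "(y - x) \<bullet> ((transpose M ** A ** M) *v (y - x)) = (M *v (y - x)) \<bullet> (A *v (M *v (y - x)))"
    by (simp only: matrix_vector_mul_assoc[symmetric] inner_transpose_matrix_vector)
  ultimately show ?thesis
    by (simp add: taylor2_remainder_def matrix_vector_mult_diff_distrib)
qed

lemma tendsto_div_norm2_linear_compose:
  fixes M :: "real^'n^'n" and e :: "real^'n \<Rightarrow> real"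
  assumes inj: "inj ((*v) M)" and lim: "((\<lambda>z. e z / (norm (z - M *v x))\<^sup>2) \<longlongrightarrow> 0) (at (M *v x))"
  shows "((\<lambda>y. e (M *v y) / (norm (y - x))\<^sup>2) \<longlongrightarrow> 0) (at x)"
proof -
  let ?K = "onorm ((*v) M)"
  have M: "((*v) M \<longlongrightarrow> M *v x) (at x)"
    by (rule bounded_linear.tendsto[OF matrix_vector_mul_bounded_linear tendsto_ident_at])
  have "\<forall>\<^sub>F y in at x. M *v y = M *v x \<longrightarrow> e (M *v x) / (norm (M *v x - M *v x))\<^sup>2 = 0"
    by simp
  from tendsto_compose_at[OF M lim this]
  have "((\<lambda>y. e (M *v y) / (norm (M *v y - M *v x))\<^sup>2) \<longlongrightarrow> 0) (at x)"
    unfolding comp_def .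
  then have bound0: "((\<lambda>y. \<bar>e (M *v y) / (norm (M *v y - M *v x))\<^sup>2\<bar> * ?K\<^sup>2) \<longlongrightarrow> 0) (at x)"
    by (intro tendsto_mult_left_zero tendsto_rabs_zero)
  have "\<bar>e (M *v y) / (norm (y - x))\<^sup>2\<bar> \<le> \<bar>e (M *v y) / (norm (M *v y - M *v x))\<^sup>2\<bar> * ?K\<^sup>2"
    if "y \<noteq> x" for y
  proof -
    have Md: "M *v y - M *v x = M *v (y - x)" and "M *v (y - x) \<noteq> 0"
      using that inj by (auto simp: matrix_vector_mult_diff_distrib dest: injD)
    have "norm (M *v (y - x)) \<le> ?K * norm (y - x)"
      by (rule onorm[OF matrix_vector_mul_bounded_linear])
    then have "(norm (M *v (y - x)))\<^sup>2 \<le> (?K * norm (y - x))\<^sup>2"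
      by (rule power_mono) simp
    then have "(norm (M *v (y - x)))\<^sup>2 \<le> ?K\<^sup>2 * (norm (y - x))\<^sup>2"
      by (simp only: power_mult_distrib)
    then have "\<bar>e (M *v y)\<bar> * (norm (M *v (y - x)))\<^sup>2 \<le> \<bar>e (M *v y)\<bar> * (?K\<^sup>2 * (norm (y - x))\<^sup>2)"
      by (rule mult_left_mono) simp
    with \<open>M *v (y - x) \<noteq> 0\<close> that show ?thesis
      unfolding Md by (simp add: abs_divide field_simps)
  qed
  then show ?thesis
    by (intro Lim_null_comparison[OF _ bound0]) (auto simp: eventually_at_filter)
qed

lemma alex_hess_linear_compose:
  fixes M :: "real^'n^'n"
  assumes M: "invertible M" and A: "alex_hess \<psi> (M *v x) A"
  shows "alex_hess (\<lambda>y. \<psi> (M *v y)) x (transpose M ** A ** M)"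
    and "grad (\<lambda>y. \<psi> (M *v y)) x = transpose M *v grad \<psi> (M *v x)"
proof -
  let ?\<phi> = "\<lambda>y. real_of_ereal (\<psi> y)"
  have inj: "inj ((*v) M)"
    by (rule inj_matrix_vector_mult[OF M])
  have "((\<lambda>y. taylor2_remainder (\<lambda>y. ?\<phi> (M *v y)) x (transpose M *v grad \<psi> (M *v x))
      (transpose M ** A ** M) y / (norm (y - x))\<^sup>2) \<longlongrightarrow> 0) (at x)"
    unfolding taylor2_remainder_linear_compose[of ?\<phi>]
    by (rule tendsto_div_norm2_linear_compose[OF inj alex_hess_taylor2_grad[OF A]])
  note lim = this
  then show "grad (\<lambda>y. \<psi> (M *v y)) x = transpose M *v grad \<psi> (M *v x)"
    by (intro grad_eqI has_derivative_if_taylor2_remainder)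
  have "open ((*v) M -` interior (edom \<psi>))"
    by (intro open_vimage linear_continuous_on matrix_vector_mul_bounded_linear) auto
  moreover have "(*v) M -` interior (edom \<psi>) \<subseteq> edom (\<lambda>y. \<psi> (M *v y))"
    using interior_subset[of "edom \<psi>"] by (auto simp: edom_def)
  ultimately have "x \<in> interior (edom (\<lambda>y. \<psi> (M *v y)))"
    using A by (intro interiorI) (auto simp: alex_hess_iff)
  moreover have "transpose (transpose M ** A ** M) = transpose M ** A ** M"
    using A by (simp add: alex_hess_iff matrix_transpose_mul matrix_mul_assoc)
  ultimately show "alex_hess (\<lambda>y. \<psi> (M *v y)) x (transpose M ** A ** M)"
    using lim unfolding alex_hess_iff by blast
qed

lemma Xset_linear_compose_iff:
  fixes M :: "real^'n^'n"
  assumes M: "invertible M"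
  shows "x \<in> Xset (\<lambda>y. \<psi> (M *v y)) \<longleftrightarrow> M *v x \<in> Xset \<psi>"
proof -
  obtain M' where M': "M ** M' = mat 1" "M' ** M = mat 1"
    using M unfolding invertible_def by blast
  then have "invertible M'"
    unfolding invertible_def by blast
  have hess_iff: "(\<exists>A. alex_hess (\<lambda>y. \<psi> (M *v y)) x A) \<longleftrightarrow> (\<exists>A. alex_hess \<psi> (M *v x) A)"
  proof
    assume "\<exists>A. alex_hess (\<lambda>y. \<psi> (M *v y)) x A"
    then obtain A where "alex_hess (\<lambda>y. \<psi> (M *v y)) (M' *v (M *v x)) A"
      by (auto simp: matrix_vector_mul_assoc M'(2))
    from alex_hess_linear_compose(1)[OF \<open>invertible M'\<close> this]
    show "\<exists>A. alex_hess \<psi> (M *v x) A"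
      by (auto simp: matrix_vector_mul_assoc M'(1))
  qed (use alex_hess_linear_compose(1)[OF M] in blast)
  have "invertible (hess (\<lambda>y. \<psi> (M *v y)) x) \<longleftrightarrow> invertible (hess \<psi> (M *v x))"
    if "alex_hess \<psi> (M *v x) A" for A
  proof -
    have "hess (\<lambda>y. \<psi> (M *v y)) x = transpose M ** hess \<psi> (M *v x) ** M"
      using hess_eqI[OF alex_hess_linear_compose(1)[OF M that]] hess_eqI[OF that] by simp
    moreover have "det M \<noteq> 0"
      using M by (simp add: invertible_det_nz)
    ultimately show ?thesis
      by (simp add: invertible_det_nz det_mul det_transpose)
  qed
  then show ?thesis
    unfolding Xset_def using hess_iff by auto
qed

lemma grad_linear_compose:
  fixes M :: "real^'n^'n"
  assumes "invertible M" and "x \<in> Xset (\<lambda>y. \<psi> (M *v y))"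
  shows "grad (\<lambda>y. \<psi> (M *v y)) x = transpose M *v grad \<psi> (M *v x)"
proof -
  have "M *v x \<in> Xset \<psi>"
    using assms by (simp add: Xset_linear_compose_iff)
  then obtain A where "alex_hess \<psi> (M *v x) A"
    unfolding Xset_def by blast
  then show ?thesis
    by (rule alex_hess_linear_compose(2)[OF assms(1)])
qed

lemma matrix_inv_left:
  fixes A :: "real^'n^'n"
  assumes "invertible A"
  shows "matrix_inv A ** A = mat 1"
  using someI_ex[OF assms[unfolded invertible_def]] by (simp add: matrix_inv_def)

section \<open>Invariance of the Orlicz mixed integral\<close>

definition orlicz_integrand :: "(real \<Rightarrow> real) \<Rightarrow> (real \<Rightarrow> real) \<Rightarrow> (real \<Rightarrow> real)
    \<Rightarrow> (real^'n \<Rightarrow> ereal) \<Rightarrow> (real^'n \<Rightarrow> real) \<Rightarrow> real^'n \<Rightarrow> ennreal" where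
  "orlicz_integrand h F1 F2 \<psi> g x =
     ennreal (h (g (grad \<psi> x) / F2 (x \<bullet> grad \<psi> x - real_of_ereal (\<psi> x)))
       * F1 (real_of_ereal (\<psi> x))) * indicator (Xset \<psi>) x"

lemma orliczV_eq_nn_integral:
  "orliczV h F1 F2 \<psi> g = (\<integral>\<^sup>+x. orlicz_integrand h F1 F2 \<psi> g x \<partial>lebesgue)"
  by (simp add: orliczV_def orlicz_integrand_def)

lemma orlicz_integrand_linear_compose:
  fixes M :: "real^'n^'n"
  assumes M: "invertible M"
  shows "orlicz_integrand h F1 F2 (\<lambda>y. \<psi> (M *v y)) (\<lambda>y. g (matrix_inv (transpose M) *v y)) x
           = orlicz_integrand h F1 F2 \<psi> g (M *v x)"
proof (cases "x \<in> Xset (\<lambda>y. \<psi> (M *v y))")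
  case True
  have M_inv: "matrix_inv (transpose M) ** transpose M = mat 1"
    by (rule matrix_inv_left[OF transpose_invertible[OF M]])
  have "grad (\<lambda>y. \<psi> (M *v y)) x = transpose M *v grad \<psi> (M *v x)"
    using True by (rule grad_linear_compose[OF M])
  then have "matrix_inv (transpose M) *v grad (\<lambda>y. \<psi> (M *v y)) x = grad \<psi> (M *v x)"
    and "x \<bullet> grad (\<lambda>y. \<psi> (M *v y)) x = (M *v x) \<bullet> grad \<psi> (M *v x)"
    by (simp_all only: matrix_vector_mul_assoc M_inv matrix_vector_mul_lid inner_transpose_matrix_vector)
  with True show ?thesis
    by (simp add: orlicz_integrand_def Xset_linear_compose_iff[OF M])
qed (simp add: orlicz_integrand_def Xset_linear_compose_iff[OF M])

theorem lemma2p1: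
  fixes \<psi> :: "real^'n \<Rightarrow> ereal" and g :: "real^'n \<Rightarrow> real"
    and F1 F2 h :: "real \<Rightarrow> real" and T :: "real^'n^'n"
  assumes "cvx_C \<psi>"
    and "F1 \<in> borel_measurable borel" and "\<forall>t. F1 t > 0"
    and "F2 \<in> borel_measurable borel" and "\<forall>t. F2 t > 0"
    and "continuous_on {0<..} h" and "\<forall>t>0. h t > 0"
    and "g \<in> Fplus (legendre \<psi>)"
    and "T \<in> SLpm"
  shows "orliczV h F1 F2 (\<lambda>x. \<psi> (T *v x)) (\<lambda>y. g (matrix_inv (transpose T) *v y))
         = orliczV h F1 F2 \<psi> g"
proof -
  have det: "\<bar>det T\<bar> = 1"
    using \<open>T \<in> SLpm\<close> by (auto simp: SLpm_def)
  then have "invertible T"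
    by (simp add: invertible_det_nz)
  show ?thesis
    unfolding orliczV_eq_nn_integral orlicz_integrand_linear_compose[OF \<open>invertible T\<close>]
    by (rule nn_integral_matrix_vector_mult[OF det])
qed

end
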